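(* Let $V_1,V_2$ be irreducible $R$-modules having the same infinitesimal character (i.e., there is an algebra homomorphism $\xi:Z(R)\to\mathbb{C}$ such that each $z\in Z(R)$ acts on both $V_1$ and $V_2$ by the scalar $\xi(z)$). If $V_1$ and $V_2$ each contain a nonzero Whittaker vector of type $\eta$, then in each $V_i$ the Whittaker vectors of type $\eta$ are unique up to scalar multiples, and $V_1\cong V_2$ as $R$-modules.
   Context: Let $f\in\mathbb{C}[H]$ be a polynomial. $R=R(f)$ is the associative $\mathbb{C}$-algebra generated by $E,F,H$ with relations $EF-FE=f(H)$, $HE-EH=E$, $HF-FH=-F$. Let $R(E)=\mathbb{C}[E]$; $Z(R)$ is the center of $R$. Fix an algebra homomorphism $\eta:R(E)\to\mathbb{C}$ with $\eta(E)\neq 0$. A vector $w$ of an $R$-module is a Whittaker vector of type $\eta$ if $Ew=\eta(E)w$. *)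

theory Defs
  imports "HOL-Computational_Algebra.Polynomial"
begin

text \<open>Formal noncommutative expressions over C in the generators E, F, H
  (elements of the free associative C-algebra before quotienting).\<close>
datatype rexpr = RE | RF | RH | RConst complex | RAdd rexpr rexpr | RMul rexpr rexpr

fun rpow :: "rexpr \<Rightarrow> nat \<Rightarrow> rexpr" where
  "rpow x 0 = RConst 1"
| "rpow x (Suc n) = RMul x (rpow x n)"

definition rpolyH :: "complex poly \<Rightarrow> rexpr" where
  "rpolyH p = foldr (\<lambda>i acc. RAdd (RMul (RConst (coeff p i)) (rpow RH i)) acc)
                    [0..<Suc (degree p)] (RConst 0)"

definition rsub :: "rexpr \<Rightarrow> rexpr \<Rightarrow> rexpr" where
  "rsub x y = RAdd x (RMul (RConst (-1)) y)"

text \<open>Equality in R = R(f): the smallest congruence containing the axioms of an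
  associative C-algebra (scalars central) and the defining relations.\<close>
inductive req :: "complex poly \<Rightarrow> rexpr \<Rightarrow> rexpr \<Rightarrow> bool" for fp where
  refl: "req fp x x"
| sym: "req fp x y \<Longrightarrow> req fp y x"
| trans: "req fp x y \<Longrightarrow> req fp y z \<Longrightarrow> req fp x z"
| cong_add: "req fp a a' \<Longrightarrow> req fp b b' \<Longrightarrow> req fp (RAdd a b) (RAdd a' b')"
| cong_mul: "req fp a a' \<Longrightarrow> req fp b b' \<Longrightarrow> req fp (RMul a b) (RMul a' b')"
| add_assoc: "req fp (RAdd (RAdd x y) z) (RAdd x (RAdd y z))"
| add_comm: "req fp (RAdd x y) (RAdd y x)"
| add_zero: "req fp (RAdd x (RConst 0)) x"
| add_neg: "req fp (RAdd x (RMul (RConst (-1)) x)) (RConst 0)"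
| mul_assoc: "req fp (RMul (RMul x y) z) (RMul x (RMul y z))"
| mul_one_l: "req fp (RMul (RConst 1) x) x"
| mul_one_r: "req fp (RMul x (RConst 1)) x"
| distrib_l: "req fp (RMul x (RAdd y z)) (RAdd (RMul x y) (RMul x z))"
| distrib_r: "req fp (RMul (RAdd x y) z) (RAdd (RMul x z) (RMul y z))"
| const_add: "req fp (RConst (a + b)) (RAdd (RConst a) (RConst b))"
| const_mul: "req fp (RConst (a * b)) (RMul (RConst a) (RConst b))"
| const_comm: "req fp (RMul (RConst c) x) (RMul x (RConst c))"
| rel_EF: "req fp (rsub (RMul RE RF) (RMul RF RE)) (rpolyH fp)"
| rel_HE: "req fp (rsub (RMul RH RE) (RMul RE RH)) RE"
| rel_HF: "req fp (rsub (RMul RH RF) (RMul RF RH)) (RMul (RConst (-1)) RF)"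

definition central :: "complex poly \<Rightarrow> rexpr \<Rightarrow> bool" where
  "central fp z \<longleftrightarrow> (\<forall>x. req fp (RMul z x) (RMul x z))"

text \<open>An algebra homomorphism xi : Z(R) \<rightarrow> C, given on representatives.\<close>
definition center_char :: "complex poly \<Rightarrow> (rexpr \<Rightarrow> complex) \<Rightarrow> bool" where
  "center_char fp \<xi> \<longleftrightarrow>
     (\<forall>z z'. central fp z \<and> req fp z z' \<longrightarrow> \<xi> z = \<xi> z') \<and>
     \<xi> (RConst 1) = 1 \<and>
     (\<forall>z z'. central fp z \<and> central fp z' \<longrightarrow>
        \<xi> (RAdd z z') = \<xi> z + \<xi> z' \<and> \<xi> (RMul z z') = \<xi> z * \<xi> z') \<and>
     (\<forall>c z. central fp z \<longrightarrow> \<xi> (RMul (RConst c) z) = c * \<xi> z)"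

text \<open>An R-module: a complex vector space (type 'v with scalar multiplication s)
  with linear operators e, f, h (actions of E, F, H) satisfying the relations.\<close>

definition polyop :: "(complex \<Rightarrow> 'v \<Rightarrow> 'v) \<Rightarrow> complex poly \<Rightarrow> ('v \<Rightarrow> 'v) \<Rightarrow> 'v \<Rightarrow> 'v::ab_group_add" where
  "polyop s p A v = (\<Sum>i\<le>degree p. s (coeff p i) ((A ^^ i) v))"

definition rmodule :: "complex poly \<Rightarrow> (complex \<Rightarrow> 'v \<Rightarrow> 'v::ab_group_add)
    \<Rightarrow> ('v \<Rightarrow> 'v) \<Rightarrow> ('v \<Rightarrow> 'v) \<Rightarrow> ('v \<Rightarrow> 'v) \<Rightarrow> bool" where
  "rmodule fp s e f h \<longleftrightarrow> vector_space s \<and>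
     Vector_Spaces.linear s s e \<and> Vector_Spaces.linear s s f \<and> Vector_Spaces.linear s s h \<and>
     (\<forall>v. e (f v) - f (e v) = polyop s fp h v) \<and>
     (\<forall>v. h (e v) - e (h v) = e v) \<and>
     (\<forall>v. h (f v) - f (h v) = - f v)"

fun ract :: "(complex \<Rightarrow> 'v \<Rightarrow> 'v) \<Rightarrow> ('v \<Rightarrow> 'v) \<Rightarrow> ('v \<Rightarrow> 'v) \<Rightarrow> ('v \<Rightarrow> 'v)
    \<Rightarrow> rexpr \<Rightarrow> 'v \<Rightarrow> 'v::ab_group_add" where
  "ract s e f h RE v = e v"
| "ract s e f h RF v = f v"
| "ract s e f h RH v = h v"
| "ract s e f h (RConst c) v = s c v"
| "ract s e f h (RAdd x y) v = ract s e f h x v + ract s e f h y v"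
| "ract s e f h (RMul x y) v = ract s e f h x (ract s e f h y v)"

definition irreducible_rmodule :: "complex poly \<Rightarrow> (complex \<Rightarrow> 'v \<Rightarrow> 'v::ab_group_add)
    \<Rightarrow> ('v \<Rightarrow> 'v) \<Rightarrow> ('v \<Rightarrow> 'v) \<Rightarrow> ('v \<Rightarrow> 'v) \<Rightarrow> bool" where
  "irreducible_rmodule fp s e f h \<longleftrightarrow> rmodule fp s e f h \<and> (\<exists>v. v \<noteq> (0::'v)) \<and>
     (\<forall>W. module.subspace s W \<and> e ` W \<subseteq> W \<and> f ` W \<subseteq> W \<and> h ` W \<subseteq> W
          \<longrightarrow> W = {0} \<or> W = UNIV)"

text \<open>Whittaker vector of type eta, where a = eta(E).\<close>
definition whittaker :: "complex \<Rightarrow> (complex \<Rightarrow> 'v \<Rightarrow> 'v) \<Rightarrow> ('v \<Rightarrow> 'v) \<Rightarrow> 'v \<Rightarrow> bool" where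
  "whittaker a s e w \<longleftrightarrow> e w = s a w"

definition rmodule_iso :: "(complex \<Rightarrow> 'v \<Rightarrow> 'v::ab_group_add) \<Rightarrow> ('v \<Rightarrow> 'v) \<Rightarrow> ('v \<Rightarrow> 'v) \<Rightarrow> ('v \<Rightarrow> 'v)
    \<Rightarrow> (complex \<Rightarrow> 'w \<Rightarrow> 'w::ab_group_add) \<Rightarrow> ('w \<Rightarrow> 'w) \<Rightarrow> ('w \<Rightarrow> 'w) \<Rightarrow> ('w \<Rightarrow> 'w)
    \<Rightarrow> ('v \<Rightarrow> 'w) \<Rightarrow> bool" where
  "rmodule_iso s1 e1 f1 h1 s2 e2 f2 h2 \<phi> \<longleftrightarrow>
     Vector_Spaces.linear s1 s2 \<phi> \<and> bij \<phi> \<and>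
     (\<forall>v. \<phi> (e1 v) = e2 (\<phi> v) \<and> \<phi> (f1 v) = f2 (\<phi> v) \<and> \<phi> (h1 v) = h2 (\<phi> v))"

end

theory Submission
  imports Defs
begin

text \<open>Choose a polynomial u with u(H) - u(H - 1) = f(H); then the Casimir element
  \<Omega> = FE + u(H) is central. Let w be a nonzero Whittaker vector of an irreducible module
  on which \<Omega> acts by the scalar c. From \<Omega> w = c w we get F w = a\<inverse> (c - u(H)) w, so
  the vectors p(H) w form a submodule on which H, E and F act by
  p \<mapsto> X p,  p \<mapsto> a p(X - 1)  and  p \<mapsto> p(X + 1) a\<inverse> (c - u).
  By irreducibility every vector is of the form p(H) w, and p(H) w determines p: applying E
  turns p(H) w = 0 into a relation for p - p(X - 1), which has lower degree.
  So the module is C[X] with operators depending only on a, f and c, and its Whittaker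
  vectors correspond to the polynomials with p(X - 1) = p, i.e. the constants.\<close>

definition req_all :: "rexpr \<Rightarrow> rexpr \<Rightarrow> bool" where
  "req_all x y \<longleftrightarrow> (\<forall>fp. req fp x y)"

text \<open>A quotient type cannot depend on f, so we compute in the quotient by the identities
  valid in every R(f). The relations involving H hold there; the relation EF - FE = f(H) is
  applied separately, in req fp.\<close>

quotient_type ralg = rexpr / req_all
  unfolding req_all_def
  by (auto intro!: equivpI reflpI sympI transpI intro: req.refl req.sym req.trans)

instantiation ralg :: "{ring, monoid_mult}"
begin

lift_definition zero_ralg :: ralg is "RConst 0" .
lift_definition one_ralg :: ralg is "RConst 1" .
lift_definition plus_ralg :: "ralg \<Rightarrow> ralg \<Rightarrow> ralg" is RAdd
  unfolding req_all_def by (auto intro: req.cong_add)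
lift_definition times_ralg :: "ralg \<Rightarrow> ralg \<Rightarrow> ralg" is RMul
  unfolding req_all_def by (auto intro: req.cong_mul)
lift_definition uminus_ralg :: "ralg \<Rightarrow> ralg" is "\<lambda>x. RMul (RConst (-1)) x"
  unfolding req_all_def by (auto intro: req.cong_mul req.refl)
lift_definition minus_ralg :: "ralg \<Rightarrow> ralg \<Rightarrow> ralg" is rsub
  unfolding req_all_def rsub_def by (auto intro: req.cong_mul req.cong_add req.refl)

instance
proof
  fix a b c :: ralg
  show "a + b + c = a + (b + c)"
    by transfer (auto simp: req_all_def intro: req.add_assoc)
  show "a + b = b + a"
    by transfer (auto simp: req_all_def intro: req.add_comm)
  show "0 + a = a"
    by transfer (auto simp: req_all_def intro: req.add_comm req.add_zero req.trans)
  show "- a + a = 0"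
    by transfer (auto simp: req_all_def intro: req.add_comm req.add_neg req.trans)
  show "a - b = a + - b"
    by transfer (auto simp: req_all_def rsub_def intro: req.refl)
  show "a * b * c = a * (b * c)"
    by transfer (auto simp: req_all_def intro: req.mul_assoc)
  show "(a + b) * c = a * c + b * c"
    by transfer (auto simp: req_all_def intro: req.distrib_r)
  show "a * (b + c) = a * b + a * c"
    by transfer (auto simp: req_all_def intro: req.distrib_l)
  show "1 * a = a"
    by transfer (auto simp: req_all_def intro: req.mul_one_l)
  show "a * 1 = a"
    by transfer (auto simp: req_all_def intro: req.mul_one_r)
qed

end

lift_definition cst :: "complex \<Rightarrow> ralg" is RConst .
lift_definition gE :: ralg is RE .
lift_definition gF :: ralg is RF .
lift_definition gH :: ralg is RH .

lemma cst_add: "cst (a + b) = cst a + cst b"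
  by transfer (auto simp: req_all_def intro: req.const_add)

lemma cst_mult: "cst (a * b) = cst a * cst b"
  by transfer (auto simp: req_all_def intro: req.const_mul)

lemma cst_commute: "cst c * x = x * cst c"
  by transfer (auto simp: req_all_def intro: req.const_comm)

lemma cst_0: "cst 0 = 0"
  by transfer (auto simp: req_all_def intro: req.refl)

lemma cst_1: "cst 1 = 1"
  by transfer (auto simp: req_all_def intro: req.refl)

lemma cst_minus_1: "cst (-1) = - 1"
  using cst_add[of 1 "-1"] by (simp add: cst_0 cst_1 eq_neg_iff_add_eq_0 add.commute)

lemma gH_gE: "gH * gE = gE * (gH + cst 1)"
proof -
  have "gH * gE - gE * gH = gE"
    by transfer (auto simp: req_all_def intro: req.rel_HE)
  then show ?thesis by (simp add: cst_1 algebra_simps)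
qed

lemma gH_gF: "gH * gF = gF * (gH + cst (-1))"
proof -
  have "gH * gF - gF * gH = - gF"
    by transfer (auto simp: req_all_def intro: req.rel_HF)
  then show ?thesis by (simp add: cst_minus_1 algebra_simps)
qed

lemma req_if_abs_ralg_eq: "abs_ralg x = abs_ralg y \<Longrightarrow> req fp x y"
  by (simp add: ralg.abs_eq_iff req_all_def)

lemma abs_ralg_simps:
  "abs_ralg (RAdd x y) = abs_ralg x + abs_ralg y"
  "abs_ralg (RMul x y) = abs_ralg x * abs_ralg y"
  "abs_ralg (rsub x y) = abs_ralg x - abs_ralg y"
  "abs_ralg (RConst c) = cst c"
  "abs_ralg RE = gE" "abs_ralg RF = gF" "abs_ralg RH = gH"
  by (simp_all add: plus_ralg.abs_eq times_ralg.abs_eq minus_ralg.abs_eq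
      cst.abs_eq gE.abs_eq gF.abs_eq gH.abs_eq)

lemma abs_ralg_rpow: "abs_ralg (rpow x n) = abs_ralg x ^ n"
  by (induction n) (simp_all add: abs_ralg_simps cst_1)

section \<open>Polynomials in H\<close>

definition polyH :: "complex poly \<Rightarrow> ralg" where
  "polyH p = abs_ralg (rpolyH p)"

lemma abs_ralg_foldr:
  "abs_ralg (foldr (\<lambda>i acc. RAdd (RMul (RConst (c i)) (rpow RH i)) acc) xs z)
    = (\<Sum>i\<leftarrow>xs. cst (c i) * gH ^ i) + abs_ralg z"
  by (induction xs) (simp_all add: abs_ralg_simps abs_ralg_rpow add.assoc)

lemma polyH_eq_sum:
  assumes "degree p < N"
  shows "polyH p = (\<Sum>i<N. cst (coeff p i) * gH ^ i)"
proof -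
  have "polyH p = (\<Sum>i<Suc (degree p). cst (coeff p i) * gH ^ i)"
    by (simp add: polyH_def rpolyH_def abs_ralg_foldr abs_ralg_simps abs_ralg_rpow cst_0
        sum_list_distinct_conv_sum_set atLeast0LessThan)
  also have "\<dots> = (\<Sum>i<N. cst (coeff p i) * gH ^ i)"
    by (rule sum.mono_neutral_left) (use assms in \<open>auto simp: coeff_eq_0 cst_0\<close>)
  finally show ?thesis .
qed

lemma polyH_0 [simp]: "polyH 0 = 0"
  by (simp add: polyH_eq_sum[of 0 1] cst_0)

lemma polyH_pCons: "polyH (pCons c p) = cst c + gH * polyH p"
proof -
  have "polyH (pCons c p) = (\<Sum>i<Suc (Suc (degree p)). cst (coeff (pCons c p) i) * gH ^ i)"
    by (rule polyH_eq_sum) (use degree_pCons_le[of c p] in simp)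
  also have "\<dots> = cst c + (\<Sum>i<Suc (degree p). gH * (cst (coeff p i) * gH ^ i))"
    by (subst sum.lessThan_Suc_shift) (simp add: cst_commute mult.assoc)
  also have "\<dots> = cst c + gH * polyH p"
    by (simp add: polyH_eq_sum[of p "Suc (degree p)"] sum_distrib_left distrib_left)
  finally show ?thesis .
qed

lemma polyH_const: "polyH [:c:] = cst c"
  by (simp add: polyH_pCons)

lemma polyH_linear: "polyH [:c, 1:] = gH + cst c"
  by (simp add: polyH_pCons polyH_const cst_1 add.commute)

lemma polyH_add: "polyH (p + q) = polyH p + polyH q"
proof (induction p arbitrary: q)
  case (pCons b p)
  obtain c q' where "q = pCons c q'"
    by (cases q)
  then show ?case
    by (simp add: polyH_pCons pCons.IH cst_add distrib_left add_ac)
qed simp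

lemma polyH_smult: "polyH (smult c p) = cst c * polyH p"
proof (induction p)
  case (pCons a p)
  have "cst c * (gH * polyH p) = gH * (cst c * polyH p)"
    by (metis cst_commute mult.assoc)
  then show ?case
    by (simp add: polyH_pCons pCons.IH cst_mult distrib_left)
qed simp

lemma polyH_mult: "polyH (p * q) = polyH p * polyH q"
proof (induction p)
  case (pCons a p)
  have "polyH (pCons a p * q) = cst a * polyH q + gH * (polyH p * polyH q)"
    by (simp add: polyH_add polyH_smult polyH_pCons pCons.IH cst_0)
  then show ?case
    by (simp add: polyH_pCons distrib_right mult.assoc)
qed simp

lemma polyH_commute_gH: "polyH p * gH = gH * polyH p"
  using polyH_mult[of p "[:0, 1:]"] polyH_mult[of "[:0, 1:]" p]
  by (simp add: polyH_linear cst_0 mult.commute)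

text \<open>E and F shift H by +1 and -1, so moving them past p(H) substitutes H + c for H.\<close>

lemma polyH_commute_shift:
  assumes "gH * x = x * (gH + cst c)"
  shows "polyH p * x = x * polyH (pcompose p [:c, 1:])"
proof (induction p)
  case (pCons b p)
  have "polyH (pCons b p) * x = cst b * x + gH * (x * polyH (pcompose p [:c, 1:]))"
    by (simp add: polyH_pCons pCons.IH distrib_right mult.assoc)
  also have "\<dots> = x * cst b + x * ((gH + cst c) * polyH (pcompose p [:c, 1:]))"
    by (simp add: cst_commute assms mult.assoc[symmetric])
  also have "\<dots> = x * polyH (pcompose (pCons b p) [:c, 1:])"
    by (simp only: pcompose_pCons polyH_add polyH_mult polyH_const polyH_linear distrib_left)
  finally show ?case .
qed simp

section \<open>Difference equations for polynomials\<close>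

lemma pcompose_power: "pcompose (p ^ n) q = pcompose p q ^ n"
  by (induction n) (simp_all add: pcompose_mult pcompose_1)

lemma pcompose_shift_inverse:
  fixes p :: "'a::comm_ring_1 poly"
  shows "pcompose (pcompose p [:-1, 1:]) [:1, 1:] = p"
    and "pcompose (pcompose p [:1, 1:]) [:-1, 1:] = p"
  by (simp_all add: pcompose_pCons flip: pcompose_assoc)

lemma shift_invariant_poly_const:
  fixes p :: "'a::field_char_0 poly"
  assumes "pcompose p [:-1, 1:] = p"
  shows "p = [:coeff p 0:]"
proof -
  have step: "poly p (x - 1) = poly p x" for x
    using arg_cong[OF assms, of "\<lambda>q. poly q x"] by (simp add: poly_pcompose)
  have "poly p (- of_nat k) = poly p 0" for k
  proof (induction k)
    case (Suc k)
    have "poly p (- of_nat (Suc k)) = poly p (- of_nat k - 1)"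
      by (rule arg_cong[where f = "poly p"]) simp
    also have "\<dots> = poly p (- of_nat k)"
      by (rule step)
    finally show ?case
      using Suc.IH by simp
  qed simp
  then have "range (\<lambda>k::nat. - of_nat k :: 'a) \<subseteq> {x. poly (p - [:poly p 0:]) x = 0}"
    by auto
  moreover have "infinite (range (\<lambda>k::nat. - of_nat k :: 'a))"
    by (rule range_inj_infinite) (simp add: inj_def)
  ultimately have "p - [:poly p 0:] = 0"
    using poly_roots_finite finite_subset by blast
  then show ?thesis by (simp add: poly_0_coeff_0)
qed

lemma degree_shift_difference_less:
  fixes p :: "'a::field_char_0 poly"
  assumes "p - pcompose p [:-1, 1:] \<noteq> 0"
  shows "degree (p - pcompose p [:-1, 1:]) < degree p"
proof (rule degree_less_if_less_eqI)
  show "degree (p - pcompose p [:-1, 1:]) \<le> degree p"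
    using degree_diff_le[of p "degree p" "pcompose p [:-1, 1:]"] by (simp add: degree_pcompose)
  show "coeff (p - pcompose p [:-1, 1:]) (degree p) = 0"
    using lead_coeff_comp[of "[:-1, 1:]" p] by (simp add: degree_pcompose)
qed fact

text \<open>The inductive step removes the top coefficient of g using the difference of
  X^(n+1), whose coefficient in degree n is n + 1.\<close>

lemma exists_poly_backward_difference:
  fixes g :: "'a::field_char_0 poly"
  shows "\<exists>u. u - pcompose u [:-1, 1:] = g"
proof (induction "degree g" arbitrary: g rule: less_induct)
  case less
  define n where "n = degree g"
  define x where "x = ([:0, 1:] :: 'a poly) ^ Suc n"
  define D where "D = x - pcompose x [:-1, 1:]"
  define c where "c = lead_coeff g / of_nat (Suc n)"
  have D_eq: "D = [:0, 1:] ^ Suc n - [:-1, 1:] ^ Suc n"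
    by (simp add: D_def x_def pcompose_power pcompose_pCons del: power_Suc)
  have coeff_D: "coeff D n = of_nat (Suc n)"
    unfolding D_eq coeff_diff
    using coeff_linear_poly_power[of n "Suc n" "0::'a" 1]
      coeff_linear_poly_power[of n "Suc n" "-1::'a" 1]
    by simp
  have "degree x = Suc n"
    by (simp add: x_def degree_power_eq)
  then have "degree D \<le> n"
    using degree_shift_difference_less[of x] unfolding D_def[symmetric]
    by (cases "D = 0") auto
  then have deg_g': "degree (g - smult c D) \<le> n"
    by (metis degree_diff_le degree_smult_le le_trans n_def order_refl)
  have "coeff (g - smult c D) n = 0"
    using coeff_D by (simp add: c_def n_def del: of_nat_Suc)
  then have "g - smult c D = 0 \<or> degree (g - smult c D) < degree g"
    using deg_g' degree_less_if_less_eqI n_def by blast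
  then obtain u where u: "u - pcompose u [:-1, 1:] = g - smult c D"
  proof
    assume "g - smult c D = 0"
    then show thesis
      using that[of 0] by simp
  qed (use less in blast)
  have "(u + smult c x) - pcompose (u + smult c x) [:-1, 1:]
      = (u - pcompose u [:-1, 1:]) + smult c D"
    by (simp add: D_def pcompose_add pcompose_smult smult_diff_right algebra_simps)
  also have "\<dots> = g"
    by (simp add: u)
  finally show ?case ..
qed

section \<open>The Casimir element\<close>

definition casimir :: "complex poly \<Rightarrow> rexpr" where
  "casimir u = RAdd (RMul RF RE) (rpolyH u)"

definition relator_EF :: "complex poly \<Rightarrow> rexpr" where
  "relator_EF fp = rsub (rsub (RMul RE RF) (RMul RF RE)) (rpolyH fp)"

declare req.trans [trans]

lemma relator_EF_req_0: "req fp (relator_EF fp) (RConst 0)"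
proof -
  have "req fp (relator_EF fp) (rsub (rpolyH fp) (rpolyH fp))"
    unfolding relator_EF_def rsub_def
    by (intro req.cong_add req.cong_mul req.refl) (rule req.rel_EF[unfolded rsub_def])
  also have "req fp \<dots> (RConst 0)"
    by (rule req_if_abs_ralg_eq) (simp add: abs_ralg_simps cst_0)
  finally show ?thesis .
qed

lemma req_modulo_relator_EF:
  assumes "abs_ralg x = abs_ralg y + abs_ralg l * abs_ralg (relator_EF fp) * abs_ralg r"
  shows "req fp x y"
proof -
  have "req fp x (RAdd y (RMul l (RMul (relator_EF fp) r)))"
    by (rule req_if_abs_ralg_eq) (simp add: assms abs_ralg_simps mult.assoc)
  also have "req fp \<dots> (RAdd y (RMul l (RMul (RConst 0) r)))"
    by (intro req.cong_add req.cong_mul req.refl relator_EF_req_0)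
  also have "req fp \<dots> y"
    by (rule req_if_abs_ralg_eq) (simp add: abs_ralg_simps cst_0)
  finally show ?thesis .
qed

lemma central_if_commutes_with_generators:
  assumes "req fp (RMul z RE) (RMul RE z)" "req fp (RMul z RF) (RMul RF z)"
    and "req fp (RMul z RH) (RMul RH z)"
  shows "central fp z"
  unfolding central_def
proof
  fix x
  show "req fp (RMul z x) (RMul x z)"
  proof (induction x)
    case (RConst c)
    show ?case by (rule req.sym, rule req.const_comm)
  next
    case (RAdd x y)
    have "req fp (RMul z (RAdd x y)) (RAdd (RMul z x) (RMul z y))"
      by (rule req.distrib_l)
    also have "req fp \<dots> (RAdd (RMul x z) (RMul y z))"
      by (rule req.cong_add[OF RAdd.IH])
    also have "req fp \<dots> (RMul (RAdd x y) z)"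
      by (rule req.sym, rule req.distrib_r)
    finally show ?case .
  next
    case (RMul x y)
    have "req fp (RMul z (RMul x y)) (RMul (RMul z x) y)"
      by (rule req.sym, rule req.mul_assoc)
    also have "req fp \<dots> (RMul (RMul x z) y)"
      by (intro req.cong_mul RMul.IH req.refl)
    also have "req fp \<dots> (RMul x (RMul z y))"
      by (rule req.mul_assoc)
    also have "req fp \<dots> (RMul x (RMul y z))"
      by (intro req.cong_mul RMul.IH req.refl)
    also have "req fp \<dots> (RMul (RMul x y) z)"
      by (rule req.sym, rule req.mul_assoc)
    finally show ?case .
  qed (use assms in auto)
qed

lemma casimir_central:
  assumes u: "u - pcompose u [:-1, 1:] = fp"
  shows "central fp (casimir u)"
proof (rule central_if_commutes_with_generators)
  have "polyH u * gE = polyH (pcompose u [:-1, 1:]) * gE + polyH fp * gE"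
    by (simp flip: u polyH_add distrib_right)
  also have "polyH (pcompose u [:-1, 1:]) * gE = gE * polyH u"
    using polyH_commute_shift[OF gH_gE] by (simp add: pcompose_shift_inverse)
  finally have "polyH u * gE = gE * polyH u + polyH fp * gE" .
  then show "req fp (RMul (casimir u) RE) (RMul RE (casimir u))"
    by (intro req_modulo_relator_EF[where l = "RConst (-1)" and r = RE])
      (simp add: casimir_def relator_EF_def abs_ralg_simps cst_minus_1 algebra_simps
        flip: polyH_def)
next
  have "polyH u * gF = gF * polyH (pcompose u [:-1, 1:])"
    using polyH_commute_shift[OF gH_gF] .
  also have "\<dots> = gF * polyH u - gF * polyH fp"
    by (simp flip: u polyH_add distrib_left add: algebra_simps)
  finally show "req fp (RMul (casimir u) RF) (RMul RF (casimir u))"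
    by (intro req_modulo_relator_EF[where l = RF and r = "RConst 1"])
      (simp add: casimir_def relator_EF_def abs_ralg_simps cst_1 algebra_simps
        flip: polyH_def)
next
  have "gH * (gF * gE) = (gH * gF) * gE"
    by (simp add: mult.assoc)
  also have "\<dots> = gF * (gH * gE) - gF * gE"
    by (simp add: gH_gF cst_minus_1 algebra_simps)
  also have "\<dots> = gF * gE * gH"
    by (simp add: gH_gE cst_1 algebra_simps)
  finally show "req fp (RMul (casimir u) RH) (RMul RH (casimir u))"
    by (intro req_if_abs_ralg_eq)
      (simp add: casimir_def abs_ralg_simps distrib_left distrib_right polyH_commute_gH
        flip: polyH_def)
qed

locale rmod = vector_space s for s :: "complex \<Rightarrow> 'v \<Rightarrow> 'v::ab_group_add" +
  fixes fp :: "complex poly" and e f h :: "'v \<Rightarrow> 'v"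
  assumes e_add: "e (x + y) = e x + e y" and e_scale: "e (s c x) = s c (e x)"
    and f_add: "f (x + y) = f x + f y" and f_scale: "f (s c x) = s c (f x)"
    and h_add: "h (x + y) = h x + h y" and h_scale: "h (s c x) = s c (h x)"
    and commutator_EF: "e (f v) - f (e v) = polyop s fp h v"
    and commutator_HE: "h (e v) - e (h v) = e v"
    and commutator_HF: "h (f v) - f (h v) = - f v"

lemma rmodule_imp_rmod: "rmodule fp s e f h \<Longrightarrow> rmod s fp e f h"
  unfolding rmodule_def rmod_def rmod_axioms_def Vector_Spaces.linear_iff by auto

context rmod
begin

abbreviation act :: "rexpr \<Rightarrow> 'v \<Rightarrow> 'v" where
  "act \<equiv> ract s e f h"

lemma act_add_scale: "act x (v + w) = act x v + act x w \<and> act x (s c v) = s c (act x v)"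
  by (induction x arbitrary: v w)
    (simp_all add: e_add e_scale f_add f_scale h_add h_scale scale_right_distrib scale_left_commute)

lemma act_add: "act x (v + w) = act x v + act x w"
  using act_add_scale by blast

lemma act_scale: "act x (s c v) = s c (act x v)"
  using act_add_scale by blast

lemma act_rpolyH: "act (rpolyH p) v = polyop s p h v"
proof -
  have act_foldr: "act (foldr (\<lambda>i acc. RAdd (RMul (RConst (c i)) (rpow RH i)) acc) xs z) v
      = (\<Sum>i\<leftarrow>xs. s (c i) ((h ^^ i) v)) + act z v" for c xs z
  proof -
    have act_rpow: "act (rpow RH i) v = (h ^^ i) v" for i v
      by (induction i arbitrary: v) simp_all
    show ?thesis by (induction xs) (simp_all add: act_rpow add.assoc)
  qed
  show ?thesis
    unfolding rpolyH_def act_foldr polyop_def lessThan_Suc_atMost[symmetric]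
    by (simp add: sum_list_distinct_conv_sum_set atLeast0LessThan)
qed

lemma act_req: "req fp x y \<Longrightarrow> act x v = act y v"
proof (induction arbitrary: v rule: req.induct)
  case (add_neg x)
  show ?case by (simp add: scale_minus_left[of 1, simplified])
next
  case (distrib_l x y z)
  show ?case by (simp add: act_add)
next
  case (const_add a b)
  show ?case by (simp add: scale_left_distrib)
next
  case (const_comm c x)
  show ?case by (simp add: act_scale)
next
  case rel_EF
  show ?case using commutator_EF[of v] by (simp add: rsub_def act_rpolyH scale_minus_left[of 1, simplified])
next
  case rel_HE
  show ?case using commutator_HE[of v] by (simp add: rsub_def scale_minus_left[of 1, simplified])
next
  case rel_HF
  show ?case using commutator_HF[of v] by (simp add: rsub_def scale_minus_left[of 1, simplified])
qed (simp_all add: add_ac)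

lemma act_cong: "abs_ralg x = abs_ralg y \<Longrightarrow> act x v = act y v"
  by (rule act_req, rule req_if_abs_ralg_eq)

lemma act_rpolyH_add: "act (rpolyH (p + q)) v = act (rpolyH p) v + act (rpolyH q) v"
  using act_cong[of "rpolyH (p + q)" "RAdd (rpolyH p) (rpolyH q)"]
  by (simp add: abs_ralg_simps polyH_add flip: polyH_def)

lemma act_rpolyH_smult: "act (rpolyH (smult c p)) v = s c (act (rpolyH p) v)"
  using act_cong[of "rpolyH (smult c p)" "RMul (RConst c) (rpolyH p)"]
  by (simp add: abs_ralg_simps polyH_smult flip: polyH_def)

lemma act_rpolyH_mult: "act (rpolyH (p * q)) v = act (rpolyH p) (act (rpolyH q) v)"
  using act_cong[of "rpolyH (p * q)" "RMul (rpolyH p) (rpolyH q)"]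
  by (simp add: abs_ralg_simps polyH_mult flip: polyH_def)

lemma act_rpolyH_const: "act (rpolyH [:c:]) v = s c v"
  using act_cong[of "rpolyH [:c:]" "RConst c"]
  by (simp add: abs_ralg_simps polyH_const flip: polyH_def)

end

section \<open>Modules generated by a Whittaker vector\<close>

locale whittaker_vector = rmod s fp e f h
  for s :: "complex \<Rightarrow> 'v \<Rightarrow> 'v::ab_group_add" and fp e f h +
  fixes a c :: complex and u :: "complex poly" and w :: 'v
  assumes a_nonzero: "a \<noteq> 0" and w_nonzero: "w \<noteq> 0" and whittaker_w: "e w = s a w"
    and u_difference: "u - pcompose u [:-1, 1:] = fp"
    and casimir_scalar: "act (casimir u) v = s c v"
begin

definition pw :: "complex poly \<Rightarrow> 'v" where
  "pw p = act (rpolyH p) w"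

lemma pw_add: "pw (p + q) = pw p + pw q"
  by (simp add: pw_def act_rpolyH_add)

lemma pw_diff: "pw (p - q) = pw p - pw q"
  using pw_add[of "p - q" q] by (simp add: algebra_simps)

lemma pw_smult: "pw (smult k p) = s k (pw p)"
  by (simp add: pw_def act_rpolyH_smult)

lemma pw_const: "pw [:k:] = s k w"
  by (simp add: pw_def act_rpolyH_const)

lemma e_pw: "e (pw p) = pw (smult a (pcompose p [:-1, 1:]))"
proof -
  have "e (pw p) = act (RMul (rpolyH (pcompose p [:-1, 1:])) RE) w"
    using act_cong[of "RMul RE (rpolyH p)" "RMul (rpolyH (pcompose p [:-1, 1:])) RE"]
      polyH_commute_shift[OF gH_gE, of "pcompose p [:-1, 1:]"]
    by (simp add: pw_def abs_ralg_simps pcompose_shift_inverse cst_1 flip: polyH_def)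
  then show ?thesis
    by (simp add: whittaker_w act_scale pw_def act_rpolyH_smult)
qed

lemma h_pw: "h (pw p) = pw ([:0, 1:] * p)"
  using act_cong[of "RMul RH (rpolyH p)" "rpolyH ([:0, 1:] * p)"]
  by (simp add: pw_def abs_ralg_simps polyH_pCons cst_0 flip: polyH_def)

text \<open>Here the Casimir element enters: \<Omega> w = c w expresses F w through H.\<close>

lemma f_w: "f w = pw (smult (inverse a) ([:c:] - u))"
proof -
  have "s a (f w) + pw u = s c w"
    using casimir_scalar[of w] by (simp add: casimir_def pw_def whittaker_w f_scale)
  then have "s a (f w) = pw ([:c:] - u)"
    by (simp add: pw_diff pw_const algebra_simps)
  then have "s (inverse a) (s a (f w)) = pw (smult (inverse a) ([:c:] - u))"
    by (simp add: pw_smult)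
  then show ?thesis
    using a_nonzero by simp
qed

lemma f_pw: "f (pw p) = pw (pcompose p [:1, 1:] * smult (inverse a) ([:c:] - u))"
proof -
  have "f (pw p) = act (RMul (rpolyH (pcompose p [:1, 1:])) RF) w"
    using act_cong[of "RMul RF (rpolyH p)" "RMul (rpolyH (pcompose p [:1, 1:])) RF"]
      polyH_commute_shift[OF gH_gF, of "pcompose p [:1, 1:]"]
    by (simp add: pw_def abs_ralg_simps pcompose_shift_inverse flip: polyH_def)
  then show ?thesis
    by (simp add: f_w pw_def flip: act_rpolyH_mult)
qed

lemma pw_surj:
  assumes "irreducible_rmodule fp s e f h"
  shows "surj pw"
proof -
  have "subspace (range pw)"
    unfolding subspace_def
  proof (intro conjI ballI allI)
    show "0 \<in> range pw"
      using pw_const[of 0] by (metis rangeI scale_zero_left)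
  next
    fix x y
    assume "x \<in> range pw" "y \<in> range pw"
    then obtain p q where "x = pw p" "y = pw q"
      by blast
    then show "x + y \<in> range pw"
      by (metis pw_add rangeI)
  next
    fix k x
    assume "x \<in> range pw"
    then obtain p where "x = pw p"
      by blast
    then show "s k x \<in> range pw"
      by (metis pw_smult rangeI)
  qed
  moreover have "e ` range pw \<subseteq> range pw" "f ` range pw \<subseteq> range pw" "h ` range pw \<subseteq> range pw"
    by (auto simp: e_pw f_pw h_pw)
  ultimately have "range pw = {0} \<or> range pw = UNIV"
    using assms unfolding irreducible_rmodule_def by blast
  moreover have "w \<in> range pw"
    using pw_const[of 1] by (metis rangeI scale_one)
  ultimately show ?thesis
    using w_nonzero by blast
qed

lemma pw_eq_0_imp: "pw p = 0 \<Longrightarrow> p = 0"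
proof (induction "degree p" arbitrary: p rule: less_induct)
  case less
  let ?q = "p - pcompose p [:-1, 1:]"
  have "s a (pw (pcompose p [:-1, 1:])) = 0"
    using e_pw[of p] less.prems e_scale[of 0 0] by (simp add: pw_smult)
  then have "pw ?q = 0"
    using a_nonzero less.prems by (simp add: pw_diff)
  have "?q = 0"
  proof (rule ccontr)
    assume "?q \<noteq> 0"
    then have "degree ?q < degree p"
      by (rule degree_shift_difference_less)
    then show False
      using less.hyps \<open>pw ?q = 0\<close> \<open>?q \<noteq> 0\<close> by blast
  qed
  then have p_const: "p = [:coeff p 0:]"
    by (simp add: shift_invariant_poly_const)
  then have "s (coeff p 0) w = 0"
    using less.prems pw_const by metis
  then show "p = 0"
    using w_nonzero p_const by simp
qed

lemma pw_inj: "inj pw"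
proof (rule injI)
  fix p q
  assume "pw p = pw q"
  then have "pw (p - q) = 0"
    by (simp add: pw_diff)
  then show "p = q"
    using pw_eq_0_imp[of "p - q"] by simp
qed

lemma whittaker_vector_multiple:
  assumes "irreducible_rmodule fp s e f h" and "e v = s a v"
  shows "\<exists>k. v = s k w"
proof -
  obtain p where p: "v = pw p"
    using pw_surj[OF assms(1)] by blast
  have "s a (pw (pcompose p [:-1, 1:])) = s a (pw p)"
    using assms(2) p by (simp add: e_pw pw_smult)
  then have "pw (pcompose p [:-1, 1:]) = pw p"
    by (rule scale_left_imp_eq[OF a_nonzero])
  then have "pcompose p [:-1, 1:] = p"
    by (rule injD[OF pw_inj])
  then have "p = [:coeff p 0:]"
    by (rule shift_invariant_poly_const)
  then have "v = s (coeff p 0) w"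
    by (metis p pw_const)
  then show ?thesis ..
qed

lemma whittaker_vectors_proportional:
  assumes "irreducible_rmodule fp s e f h"
  shows "\<forall>v v'. whittaker a s e v \<and> v \<noteq> 0 \<and> whittaker a s e v' \<longrightarrow> (\<exists>k. v' = s k v)"
proof (intro allI impI)
  fix v v'
  assume v: "whittaker a s e v \<and> v \<noteq> 0 \<and> whittaker a s e v'"
  obtain k where k: "v = s k w"
    using whittaker_vector_multiple[OF assms] v unfolding whittaker_def by blast
  obtain k' where k': "v' = s k' w"
    using whittaker_vector_multiple[OF assms] v unfolding whittaker_def by blast
  have "k \<noteq> 0"
    using v k by auto
  then have "v' = s (k' / k) v"
    using k k' by simp
  then show "\<exists>k. v' = s k v" ..
qed

end

text \<open>Two such modules sharing a, f and the Casimir eigenvalue are isomorphic via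
  p(H) w1 \<mapsto> p(H) w2.\<close>

lemma whittaker_vector_rmodule_iso:
  assumes W1: "whittaker_vector s1 fp e1 f1 h1 a c u w1" "irreducible_rmodule fp s1 e1 f1 h1"
    and W2: "whittaker_vector s2 fp e2 f2 h2 a c u w2" "irreducible_rmodule fp s2 e2 f2 h2"
  shows "\<exists>\<phi>. rmodule_iso s1 e1 f1 h1 s2 e2 f2 h2 \<phi>"
proof -
  interpret W1: whittaker_vector s1 fp e1 f1 h1 a c u w1 by (rule W1(1))
  interpret W2: whittaker_vector s2 fp e2 f2 h2 a c u w2 by (rule W2(1))
  have inj1: "inj W1.pw" and surj1: "surj W1.pw" and bij2: "bij W2.pw"
    using W1.pw_inj W1.pw_surj[OF W1(2)] W2.pw_inj W2.pw_surj[OF W2(2)] by (auto intro: bijI)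
  define \<phi> where "\<phi> = W2.pw \<circ> inv W1.pw"
  have \<phi>_pw: "\<phi> (W1.pw p) = W2.pw p" for p
    using inj1 by (simp add: \<phi>_def)
  have pw_cases: "\<exists>p. x = W1.pw p" for x
    using surj1 by (simp add: surj_def)
  have "Vector_Spaces.linear s1 s2 \<phi>"
    unfolding Vector_Spaces.linear_iff
  proof (intro conjI allI)
    fix x y k
    obtain p q where x: "x = W1.pw p" and y: "y = W1.pw q"
      using pw_cases by blast
    show "\<phi> (x + y) = \<phi> x + \<phi> y"
      unfolding x y by (simp add: \<phi>_pw flip: W1.pw_add W2.pw_add)
    show "\<phi> (s1 k x) = s2 k (\<phi> x)"
      unfolding x by (simp add: \<phi>_pw flip: W1.pw_smult W2.pw_smult)
  qed (fact W1.vector_space_axioms W2.vector_space_axioms)+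
  moreover have "bij \<phi>"
    unfolding \<phi>_def using bij_comp[OF bij_imp_bij_inv[OF bijI[OF inj1 surj1]] bij2] .
  moreover have "\<phi> (e1 x) = e2 (\<phi> x) \<and> \<phi> (f1 x) = f2 (\<phi> x) \<and> \<phi> (h1 x) = h2 (\<phi> x)" for x
  proof -
    obtain p where "x = W1.pw p"
      using pw_cases by blast
    then show ?thesis
      by (simp add: \<phi>_pw W1.e_pw W2.e_pw W1.f_pw W2.f_pw W1.h_pw W2.h_pw)
  qed
  ultimately show ?thesis
    unfolding rmodule_iso_def by blast
qed

theorem mainTheorem8:
  fixes fp :: "complex poly" and a :: complex
    and s1 :: "complex \<Rightarrow> 'v \<Rightarrow> 'v::ab_group_add" and e1 f1 h1 :: "'v \<Rightarrow> 'v"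
    and s2 :: "complex \<Rightarrow> 'w \<Rightarrow> 'w::ab_group_add" and e2 f2 h2 :: "'w \<Rightarrow> 'w"
  assumes "a \<noteq> 0"
    and "irreducible_rmodule fp s1 e1 f1 h1"
    and "irreducible_rmodule fp s2 e2 f2 h2"
    and "\<exists>\<xi>. center_char fp \<xi> \<and>
           (\<forall>z. central fp z \<longrightarrow>
              (\<forall>v. ract s1 e1 f1 h1 z v = s1 (\<xi> z) v) \<and>
              (\<forall>w. ract s2 e2 f2 h2 z w = s2 (\<xi> z) w))"
    and "\<exists>w. w \<noteq> 0 \<and> whittaker a s1 e1 w"
    and "\<exists>w. w \<noteq> 0 \<and> whittaker a s2 e2 w"
  shows "(\<forall>w w'. whittaker a s1 e1 w \<and> w \<noteq> 0 \<and> whittaker a s1 e1 w' \<longrightarrow> (\<exists>c. w' = s1 c w))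
       \<and> (\<forall>w w'. whittaker a s2 e2 w \<and> w \<noteq> 0 \<and> whittaker a s2 e2 w' \<longrightarrow> (\<exists>c. w' = s2 c w))
       \<and> (\<exists>\<phi>. rmodule_iso s1 e1 f1 h1 s2 e2 f2 h2 \<phi>)"
proof -
  obtain u where u: "u - pcompose u [:-1, 1:] = fp"
    using exists_poly_backward_difference by blast
  obtain \<xi> where \<xi>: "\<forall>z. central fp z \<longrightarrow>
      (\<forall>v. ract s1 e1 f1 h1 z v = s1 (\<xi> z) v) \<and> (\<forall>w. ract s2 e2 f2 h2 z w = s2 (\<xi> z) w)"
    using assms(4) by blast
  have casimir1: "\<And>v. ract s1 e1 f1 h1 (casimir u) v = s1 (\<xi> (casimir u)) v"
    and casimir2: "\<And>v. ract s2 e2 f2 h2 (casimir u) v = s2 (\<xi> (casimir u)) v"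
    using \<xi> casimir_central[OF u] by blast+
  obtain w1 w2 where "w1 \<noteq> 0" "e1 w1 = s1 a w1" "w2 \<noteq> 0" "e2 w2 = s2 a w2"
    using assms(5,6) unfolding whittaker_def by blast
  then have W1: "whittaker_vector s1 fp e1 f1 h1 a (\<xi> (casimir u)) u w1"
    and W2: "whittaker_vector s2 fp e2 f2 h2 a (\<xi> (casimir u)) u w2"
    using assms(1-3) u casimir1 casimir2 unfolding irreducible_rmodule_def
    by (simp_all add: whittaker_vector.intro whittaker_vector_axioms.intro rmodule_imp_rmod)
  show ?thesis
    using whittaker_vector.whittaker_vectors_proportional[OF W1 assms(2)]
      whittaker_vector.whittaker_vectors_proportional[OF W2 assms(3)]
      whittaker_vector_rmodule_iso[OF W1 assms(2) W2 assms(3)]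
    by blast
qed

end
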